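(* Let $K>1$ and define the asymmetric softmax $\tilde{\bm{\psi}}:\mathbb{R}^{K+1}\to\mathbb{R}^{K+1}$ by $$\tilde{\psi}_y(\bm{u})=\frac{\exp(u_y)}{\sum_{y'=1}^{K}\exp(u_{y'})}\ \ (1\le y\le K),\qquad \tilde{\psi}_{K+1}(\bm{u})=\frac{\exp(u_{K+1})}{\sum_{y'=1}^{K+1}\exp(u_{y'})-\max_{y'\in\{1,\dots,K\}}\exp(u_{y'})}.$$ Then for every $\bm{u}\in\mathbb{R}^{K+1}$: (i) $\tilde{\bm{\psi}}(\bm{u})\in\Delta^K\times[0,1]$; (ii) $\mathop{\rm argmax}_{y\in\{1,\dots,K+1\}}\tilde{\psi}_y(\bm{u})=\mathop{\rm argmax}_{y\in\{1,\dots,K+1\}}u_y$.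
   Context: $\Delta^K$ denotes the probability simplex $\{\bm{p}\in\mathbb{R}^K:p_y\ge0,\ \sum_y p_y=1\}$; $\Delta^K\times[0,1]$ means the first $K$ coordinates lie in $\Delta^K$ and the last in $[0,1]$. *)

theory Defs
  imports Complex_Main
begin

text \<open>Asymmetric softmax on R^(K+1); vectors are functions nat => real, indices 1..K+1.\<close>
definition asym_softmax :: "nat \<Rightarrow> (nat \<Rightarrow> real) \<Rightarrow> nat \<Rightarrow> real" where
  "asym_softmax K u y =
     (if y = K + 1 then
        exp (u (K+1)) / ((\<Sum>y'=1..K+1. exp (u y')) - Max ((\<lambda>y'. exp (u y')) ` {1..K}))
      else exp (u y) / (\<Sum>y'=1..K. exp (u y')))"

definition argmax_set :: "'a set \<Rightarrow> ('a \<Rightarrow> real) \<Rightarrow> 'a set" where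
  "argmax_set A f = {y \<in> A. \<forall>y'\<in>A. f y' \<le> f y}"

end

theory Submission
  imports Defs
begin

text \<open>Write \<open>w = exp \<circ> u\<close>, \<open>S\<close> for the sum of the first \<open>K\<close> weights, \<open>M\<close> for their maximum and
  \<open>E = w (K+1)\<close>. The first \<open>K\<close> coordinates are \<open>w y / S\<close>, a probability vector whose largest
  entry is \<open>M / S\<close>; the last one is \<open>E / (S + E - M)\<close>, which lies in \<open>[0,1]\<close> because \<open>M \<le> S\<close>.
  Since \<open>K > 1\<close> we even have \<open>M < S\<close>, and then cross-multiplying shows that \<open>E / (S + E - M)\<close>
  compares with \<open>M / S\<close> exactly as \<open>E\<close> compares with \<open>M\<close>. Hence the maximizers are the same
  as those of \<open>w\<close>, and \<open>exp\<close> being strictly monotone, the same as those of \<open>u\<close>.\<close>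

lemma ratio_le_shifted_ratio_iff:
  fixes M E S :: real
  assumes "M < S" "0 \<le> M" "0 \<le> E"
  shows "M / S \<le> E / (S + E - M) \<longleftrightarrow> M \<le> E"
proof -
  have "M / S \<le> E / (S + E - M) \<longleftrightarrow> M * (S + E - M) \<le> E * S"
    using assms by (simp add: divide_simps)
  also have "\<dots> \<longleftrightarrow> (M - E) * (S - M) \<le> 0"
    by (simp add: algebra_simps)
  also have "\<dots> \<longleftrightarrow> M \<le> E"
    using assms(1) by (simp add: mult_le_0_iff)
  finally show ?thesis .
qed

lemma shifted_ratio_le_ratio_iff:
  fixes M E S :: real
  assumes "M < S" "0 \<le> M" "0 \<le> E"
  shows "E / (S + E - M) \<le> M / S \<longleftrightarrow> E \<le> M"
proof -
  have "E / (S + E - M) \<le> M / S \<longleftrightarrow> E * S \<le> M * (S + E - M)"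
    using assms by (simp add: divide_simps)
  also have "\<dots> \<longleftrightarrow> 0 \<le> (M - E) * (S - M)"
    by (simp add: algebra_simps)
  also have "\<dots> \<longleftrightarrow> E \<le> M"
    using assms(1) by (simp add: zero_le_mult_iff)
  finally show ?thesis .
qed

lemma Max_image_less_sum:
  fixes f :: "'a \<Rightarrow> real"
  assumes "finite A" "2 \<le> card A" "\<And>x. x \<in> A \<Longrightarrow> 0 < f x"
  shows "Max (f ` A) < sum f A"
proof -
  have "A \<noteq> {}" using assms(2) by auto
  then have "Max (f ` A) \<in> f ` A"
    using assms(1) by (intro Max_in) auto
  then obtain j where j: "j \<in> A" "f j = Max (f ` A)"
    by (metis imageE)
  have "A - {j} \<noteq> {}" using assms(2) card_mono[of "{j}" A] by auto
  then obtain k where k: "k \<in> A - {j}" by blast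
  have "f k \<le> sum f (A - {j})"
    using k assms by (intro member_le_sum) (auto intro: less_imp_le)
  moreover have "sum f A = f j + sum f (A - {j})"
    using j(1) assms(1) by (simp add: sum.remove)
  ultimately show ?thesis using j(2) k assms(3) by fastforce
qed

lemma argmax_set_comp_strict_mono:
  assumes "strict_mono h"
  shows "argmax_set A (\<lambda>y. h (f y)) = argmax_set A f"
  using strict_mono_less_eq[OF assms] by (simp add: argmax_set_def)

lemma mem_argmax_set_insert_iff:
  "y \<in> argmax_set (insert a A) f \<longleftrightarrow>
     (y = a \<and> (\<forall>y'\<in>A. f y' \<le> f a)) \<or> (y \<in> argmax_set A f \<and> f a \<le> f y)"
  by (auto simp: argmax_set_def)

definition asym_normalize :: "nat \<Rightarrow> (nat \<Rightarrow> real) \<Rightarrow> nat \<Rightarrow> real" where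
  "asym_normalize K w y =
     (if y = K + 1 then w (K+1) / ((\<Sum>y'=1..K+1. w y') - Max (w ` {1..K}))
      else w y / (\<Sum>y'=1..K. w y'))"

lemma asym_softmax_eq_asym_normalize: "asym_softmax K u = asym_normalize K (\<lambda>y. exp (u y))"
  by (simp add: fun_eq_iff asym_softmax_def asym_normalize_def)

lemma asym_normalize_le_K:
  "y \<in> {1..K} \<Longrightarrow> asym_normalize K w y = w y / (\<Sum>y'=1..K. w y')"
  by (simp add: asym_normalize_def)

lemma asym_normalize_last:
  "asym_normalize K w (K+1) =
     w (K+1) / ((\<Sum>y'=1..K. w y') + w (K+1) - Max (w ` {1..K}))"
  by (simp add: asym_normalize_def)

context
  fixes K :: nat and w :: "nat \<Rightarrow> real"
  assumes weights_pos: "\<And>y. 0 < w y"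
begin

lemma weights_sum_pos: "1 \<le> K \<Longrightarrow> 0 < (\<Sum>y'=1..K. w y')"
  using weights_pos by (intro sum_pos) auto

lemma Max_weights_nonneg:
  assumes "1 \<le> K"
  shows "0 \<le> Max (w ` {1..K})"
proof -
  have "w 1 \<le> Max (w ` {1..K})"
    using assms by (intro Max_ge) auto
  then show ?thesis
    using weights_pos[of 1] by linarith
qed

lemma Max_weights_le_sum: "1 \<le> K \<Longrightarrow> Max (w ` {1..K}) \<le> (\<Sum>y'=1..K. w y')"
  using weights_pos by (intro Max.boundedI) (auto intro: member_le_sum less_imp_le)

lemma Max_weights_less_sum: "1 < K \<Longrightarrow> Max (w ` {1..K}) < (\<Sum>y'=1..K. w y')"
  using weights_pos by (intro Max_image_less_sum) auto

lemma asym_normalize_last_denominator_ge: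
  "1 \<le> K \<Longrightarrow> w (K+1) \<le> (\<Sum>y'=1..K. w y') + w (K+1) - Max (w ` {1..K})"
  using Max_weights_le_sum by linarith

lemma asym_normalize_nonneg:
  assumes "1 \<le> K"
  shows "0 \<le> asym_normalize K w y"
proof (cases "y = K+1")
  case True
  show ?thesis
    using asym_normalize_last_denominator_ge[OF assms] weights_pos[of "K+1"]
    unfolding True asym_normalize_last by simp
next
  case False
  then show ?thesis
    using weights_sum_pos[OF assms] weights_pos[of y] by (simp add: asym_normalize_def)
qed

lemma asym_normalize_last_le_1:
  assumes "1 \<le> K"
  shows "asym_normalize K w (K+1) \<le> 1"
  using asym_normalize_last_denominator_ge[OF assms] weights_pos[of "K+1"]
  unfolding asym_normalize_last by simp

lemma asym_normalize_sum:
  assumes "1 \<le> K"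
  shows "(\<Sum>y=1..K. asym_normalize K w y) = 1"
  using weights_sum_pos[OF assms]
  by (simp add: asym_normalize_le_K sum_divide_distrib[symmetric])

lemma argmax_set_asym_normalize_le_K:
  assumes "1 \<le> K"
  shows "argmax_set {1..K} (asym_normalize K w) = argmax_set {1..K} w"
proof -
  define S where "S = (\<Sum>y'=1..K. w y')"
  have "0 < S" using weights_sum_pos[OF assms] unfolding S_def .
  have "argmax_set {1..K} (asym_normalize K w) = argmax_set {1..K} (\<lambda>y. w y / S)"
    by (auto simp: argmax_set_def asym_normalize_le_K S_def)
  also have "\<dots> = argmax_set {1..K} w"
    using \<open>0 < S\<close>
    by (intro argmax_set_comp_strict_mono) (simp add: strict_mono_def divide_strict_right_mono)
  finally show ?thesis .
qed

lemma asym_normalize_last_maximal_iff: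
  assumes "1 < K"
  shows "(\<forall>y'\<in>{1..K}. asym_normalize K w y' \<le> asym_normalize K w (K+1))
     \<longleftrightarrow> (\<forall>y'\<in>{1..K}. w y' \<le> w (K+1))"
proof -
  define S where "S = (\<Sum>y'=1..K. w y')"
  define M where "M = Max (w ` {1..K})"
  define E where "E = w (K+1)"
  have "0 < S" using weights_sum_pos assms unfolding S_def by simp
  have "(\<forall>y'\<in>{1..K}. asym_normalize K w y' \<le> asym_normalize K w (K+1))
      \<longleftrightarrow> (\<forall>y'\<in>{1..K}. w y' \<le> E / (S + E - M) * S)"
    unfolding asym_normalize_last using \<open>0 < S\<close>
    by (simp add: asym_normalize_le_K pos_divide_le_eq S_def M_def E_def)
  also have "\<dots> \<longleftrightarrow> M / S \<le> E / (S + E - M)"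
    using assms \<open>0 < S\<close> unfolding M_def by (simp add: pos_divide_le_eq)
  also have "\<dots> \<longleftrightarrow> M \<le> E"
    using assms Max_weights_less_sum Max_weights_nonneg weights_pos[of "K+1"]
    unfolding S_def M_def E_def by (intro ratio_le_shifted_ratio_iff) auto
  also have "\<dots> \<longleftrightarrow> (\<forall>y'\<in>{1..K}. w y' \<le> w (K+1))"
    using assms unfolding M_def E_def by simp
  finally show ?thesis .
qed

lemma asym_normalize_last_le_iff:
  assumes "1 < K" and y: "y \<in> argmax_set {1..K} w"
  shows "asym_normalize K w (K+1) \<le> asym_normalize K w y \<longleftrightarrow> w (K+1) \<le> w y"
proof -
  define S where "S = (\<Sum>y'=1..K. w y')"
  define M where "M = Max (w ` {1..K})"
  have "y \<in> {1..K}"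
    using y by (simp add: argmax_set_def)
  moreover have "w y = M"
    using y unfolding M_def argmax_set_def by (intro Max_eqI[symmetric]) auto
  moreover have "M < S" "0 \<le> M"
    using assms Max_weights_less_sum Max_weights_nonneg unfolding S_def M_def by auto
  ultimately show ?thesis
    unfolding asym_normalize_last
    using shifted_ratio_le_ratio_iff[of M S "w (K+1)"] weights_pos[of "K+1"]
    by (simp add: asym_normalize_le_K S_def M_def less_imp_le)
qed

lemma argmax_set_asym_normalize:
  assumes "1 < K"
  shows "argmax_set {1..K+1} (asym_normalize K w) = argmax_set {1..K+1} w"
proof -
  have "{1..K+1} = insert (K+1) {1..K}" by auto
  then show ?thesis
    using asym_normalize_last_maximal_iff[OF assms] asym_normalize_last_le_iff[OF assms]
      argmax_set_asym_normalize_le_K[OF less_imp_le[OF assms]]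
    by (auto simp only: mem_argmax_set_insert_iff)
qed

end

theorem proposition1:
  fixes K :: nat and u :: "nat \<Rightarrow> real"
  assumes "K > 1"
  shows "(\<forall>y\<in>{1..K}. asym_softmax K u y \<ge> 0)
       \<and> (\<Sum>y=1..K. asym_softmax K u y) = 1
       \<and> 0 \<le> asym_softmax K u (K+1) \<and> asym_softmax K u (K+1) \<le> 1
       \<and> argmax_set {1..K+1} (asym_softmax K u) = argmax_set {1..K+1} u"
proof -
  have exp_pos: "\<And>y. 0 < exp (u y)" by simp
  have "1 \<le> K" using assms by simp
  have "argmax_set {1..K+1} (asym_normalize K (\<lambda>y. exp (u y))) = argmax_set {1..K+1} u"
    using argmax_set_asym_normalize[OF exp_pos assms]
      argmax_set_comp_strict_mono[of exp] by (simp add: strict_mono_def)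
  then show ?thesis
    unfolding asym_softmax_eq_asym_normalize
    using asym_normalize_nonneg[OF exp_pos \<open>1 \<le> K\<close>] asym_normalize_sum[OF exp_pos \<open>1 \<le> K\<close>]
      asym_normalize_last_le_1[OF exp_pos \<open>1 \<le> K\<close>] by simp
qed

end
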